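(* Let $(\vec U,\le,{}^*,\vee,\wedge)$ be a universe of separations containing a separation system $\vec S$ (with induced order and involution), and let $\mathcal F\subseteq 2^{\vec S}$ be a set of stars. Let $(T,\alpha)$ be an irredundant $S$-tree over $\mathcal F$, let $x$ be a leaf of $T$, and let $\vec e$ be the edge of $T$ at $x$ oriented away from $x$. Assume $\vec r:=\alpha(\vec e)$ is nontrivial and nondegenerate and that $\alpha(\vec e\,')\neq\vec r$ for every $\vec e\,'\in\vec E(T)$ other than $\vec e$. Let $\vec s_0\in\vec S$ be $\mathcal F$-linked to $\vec r$, and let $\alpha':=f^{\vec r}_{\vec s_0}\circ\alpha$. Then $\alpha'$ is well defined with values in $\vec S$, and $(T,\alpha')$ is an $S$-tree over $\mathcal F\cup\{\{\overleftarrow s_0\}\}$ in which $\{\overleftarrow s_0\}$ is associated with $x$ but with no other leaf of $T$.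
   Context: A separation system $(\vec S,\le,{}^* )$ is a partially ordered set with an order-reversing involution ${}^*$; write $\overleftarrow s:=\vec s^{\,*}$, a separation is $s=\{\vec s,\overleftarrow s\}$, $S$ is the set of separations, $s$ is degenerate if $\vec s=\overleftarrow s$, and $\vec r$ is trivial in $\vec S$ if there is $s\in S$ with $\vec r<\vec s$ and $\vec r<\overleftarrow s$. A star is a nonempty $\sigma\subseteq\vec S$ with $\vec r\le\overleftarrow s$ for all distinct $\vec r,\vec s\in\sigma$. A universe of separations $(\vec U,\le,{}^*,\vee,\wedge)$ is a separation system in which any two elements have a supremum $\vee$ and infimum $\wedge$. An $S$-tree is a pair $(T,\alpha)$ with $T$ a finite tree with at least one edge and $\alpha:\vec E(T)\to\vec S$ ($\vec E(T)=\{(x,y):\{x,y\}\in E(T)\}$) with $\alpha(y,x)=\alpha(x,y)^*$; $\alpha(\vec F_t)$, $\vec F_t=\{(y,t):yt\in E(T)\}$, is associated with node $t$; it is over $\mathcal F$ if $\alpha(\vec F_t)\in\mathcal F$ for all $t$; it is irredundant if no node $t$ has distinct neighbours $t',t''$ with $\alpha(t',t)=\alpha(t'',t)$. For nontrivial nondegenerate $\vec r\in\vec S$, $S_{\ge\vec r}$ is the set of $s\in S$ with an orientation $\ge\vec r$ and $\vec S_{\ge\vec r}$ the set of their orientations. For $\vec s_0\ge\vec r$ in $\vec S$, the shifting map $f^{\vec r}_{\vec s_0}:\vec S_{\ge\vec r}\to\vec U$ is given by $f(\vec s)=\vec s\vee\vec s_0$ and $f(\overleftarrow s)=(\vec s\vee\vec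 s_0)^*$ for all $\vec s\in\vec S_{\ge\vec r}\setminus\{\overleftarrow r\}$ with $\vec s\ge\vec r$. $\vec s_0\in\vec S$ is linked to $\vec r$ if $\vec s_0\ge\vec r$ and every $\vec s\in\vec S$ with $\vec s\ge\vec r$, $\vec s\ne\overleftarrow r$ satisfies $\vec s\vee\vec s_0\in\vec S$. It is $\mathcal F$-linked to $\vec r$ if it is linked to $\vec r$ and for every star $\sigma\in\mathcal F$ with $\sigma\subseteq\vec S_{\ge\vec r}\setminus\{\overleftarrow r\}$ that has an element $\ge\vec r$, the image $f^{\vec r}_{\vec s_0}(\sigma)$ lies in $\mathcal F$. *)

theory Defs
  imports Main
begin

text \<open>The universe is the carrier type 'u, a lattice (so suprema/infima exist: sup, inf),
  together with an order-reversing involution star.\<close>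
definition universe :: "('u::lattice \<Rightarrow> 'u) \<Rightarrow> bool" where
  "universe star \<longleftrightarrow> (\<forall>x. star (star x) = x) \<and> (\<forall>x y. x \<le> y \<longrightarrow> star y \<le> star x)"

definition sep_system :: "('u::lattice \<Rightarrow> 'u) \<Rightarrow> 'u set \<Rightarrow> bool" where
  "sep_system star S \<longleftrightarrow> (\<forall>s\<in>S. star s \<in> S)"

definition degenerate :: "('u::lattice \<Rightarrow> 'u) \<Rightarrow> 'u \<Rightarrow> bool" where
  "degenerate star s \<longleftrightarrow> s = star s"

definition trivial_in :: "('u::lattice \<Rightarrow> 'u) \<Rightarrow> 'u set \<Rightarrow> 'u \<Rightarrow> bool" where
  "trivial_in star S r \<longleftrightarrow> (\<exists>s\<in>S. r < s \<and> r < star s)"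

definition is_star :: "('u::lattice \<Rightarrow> 'u) \<Rightarrow> 'u set \<Rightarrow> 'u set \<Rightarrow> bool" where
  "is_star star S \<sigma> \<longleftrightarrow> \<sigma> \<noteq> {} \<and> \<sigma> \<subseteq> S \<and> (\<forall>r\<in>\<sigma>. \<forall>s\<in>\<sigma>. r \<noteq> s \<longrightarrow> r \<le> star s)"

definition S_ge :: "('u::lattice \<Rightarrow> 'u) \<Rightarrow> 'u set \<Rightarrow> 'u \<Rightarrow> 'u set" where
  "S_ge star S r = {s \<in> S. r \<le> s \<or> r \<le> star s}"

text \<open>Shifting map f^r_{s0}: f(s) = s \<squnion> s0 and f(star s) = star (s \<squnion> s0) for s \<ge> r, s \<noteq> star r.
  (Meaningful on S_ge star S r.)\<close>
definition shift :: "('u::lattice \<Rightarrow> 'u) \<Rightarrow> 'u \<Rightarrow> 'u \<Rightarrow> 'u \<Rightarrow> 'u" where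
  "shift star r s0 s = (if r \<le> s \<and> s \<noteq> star r then sup s s0 else star (sup (star s) s0))"

definition linked :: "('u::lattice \<Rightarrow> 'u) \<Rightarrow> 'u set \<Rightarrow> 'u \<Rightarrow> 'u \<Rightarrow> bool" where
  "linked star S r s0 \<longleftrightarrow> s0 \<in> S \<and> r \<le> s0 \<and>
     (\<forall>s\<in>S. r \<le> s \<and> s \<noteq> star r \<longrightarrow> sup s s0 \<in> S)"

definition F_linked :: "('u::lattice \<Rightarrow> 'u) \<Rightarrow> 'u set \<Rightarrow> 'u set set \<Rightarrow> 'u \<Rightarrow> 'u \<Rightarrow> bool" where
  "F_linked star S F r s0 \<longleftrightarrow> linked star S r s0 \<and>
     (\<forall>\<sigma>\<in>F. is_star star S \<sigma> \<and> \<sigma> \<subseteq> S_ge star S r - {star r} \<and> (\<exists>s\<in>\<sigma>. r \<le> s)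
        \<longrightarrow> shift star r s0 ` \<sigma> \<in> F)"

text \<open>A graph is given by a vertex set V and a set E of oriented edges (x,y); each
  undirected edge {x,y} appears as both (x,y) and (y,x).\<close>
definition is_cycle :: "('v \<times> 'v) set \<Rightarrow> 'v list \<Rightarrow> bool" where
  "is_cycle E cs \<longleftrightarrow> length cs \<ge> 3 \<and> distinct cs \<and>
     (\<forall>i. Suc i < length cs \<longrightarrow> (cs ! i, cs ! Suc i) \<in> E) \<and> (last cs, hd cs) \<in> E"

definition finite_tree :: "'v set \<Rightarrow> ('v \<times> 'v) set \<Rightarrow> bool" where
  "finite_tree V E \<longleftrightarrow> finite V \<and> E \<subseteq> V \<times> V \<and> E \<noteq> {} \<and>
     (\<forall>x y. (x, y) \<in> E \<longrightarrow> (y, x) \<in> E) \<and> (\<forall>x. (x, x) \<notin> E) \<and>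
     (\<forall>x\<in>V. \<forall>y\<in>V. (x, y) \<in> E\<^sup>*) \<and> (\<nexists>cs. is_cycle E cs)"

definition neighbours :: "('v \<times> 'v) set \<Rightarrow> 'v \<Rightarrow> 'v set" where
  "neighbours E t = {y. (y, t) \<in> E}"

definition is_leaf :: "'v set \<Rightarrow> ('v \<times> 'v) set \<Rightarrow> 'v \<Rightarrow> bool" where
  "is_leaf V E x \<longleftrightarrow> x \<in> V \<and> card (neighbours E x) = 1"

definition F_at :: "('v \<times> 'v) set \<Rightarrow> 'v \<Rightarrow> ('v \<times> 'v) set" where
  "F_at E t = {(y, t) | y. (y, t) \<in> E}"

definition S_tree :: "('u::lattice \<Rightarrow> 'u) \<Rightarrow> 'u set \<Rightarrow> 'v set \<Rightarrow> ('v \<times> 'v) set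
    \<Rightarrow> ('v \<times> 'v \<Rightarrow> 'u) \<Rightarrow> bool" where
  "S_tree star S V E \<alpha> \<longleftrightarrow> finite_tree V E \<and> (\<forall>e\<in>E. \<alpha> e \<in> S) \<and>
     (\<forall>x y. (x, y) \<in> E \<longrightarrow> \<alpha> (y, x) = star (\<alpha> (x, y)))"

definition over :: "'v set \<Rightarrow> ('v \<times> 'v) set \<Rightarrow> ('v \<times> 'v \<Rightarrow> 'u) \<Rightarrow> 'u set set \<Rightarrow> bool" where
  "over V E \<alpha> F \<longleftrightarrow> (\<forall>t\<in>V. \<alpha> ` F_at E t \<in> F)"

definition irredundant :: "'v set \<Rightarrow> ('v \<times> 'v) set \<Rightarrow> ('v \<times> 'v \<Rightarrow> 'u) \<Rightarrow> bool" where
  "irredundant V E \<alpha> \<longleftrightarrow> (\<nexists>t t' t''. t \<in> V \<and> (t', t) \<in> E \<and> (t'', t) \<in> E \<and> t' \<noteq> t''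
      \<and> \<alpha> (t', t) = \<alpha> (t'', t))"

end

theory Submission
  imports Defs
begin

(* Write r = alpha(x,y) for the image of the leaf edge and f for the shifting
   map f^r_{s0}.
   (1) Order-theoretic facts about f, valid in any universe for a nontrivial nondegenerate r
       and an s0 linked to r: f maps S_{>=r} into S, commutes with the involution, sends
       star r to star s0, and never sends a separation s >= r (s ~= star r) to star s0.
   (2) Tree facts for an irredundant S-tree over stars: at every node two distinct incoming
       edges satisfy alpha(u,w) <= alpha(w,v); following a shortest path from the leaf x
       this gives, for every node v ~= x, an incoming edge whose label is >= r.  Hence
       every label lies in S_{>=r}, and if r is labelled only at (x,y) then the star at any
       node t ~= x lies in S_{>=r} - {star r} and contains an element >= r.
   The theorem combines the two: (1) makes f o alpha an S-tree, (2) together with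
   F-linkedness puts the stars at nodes t ~= x into F, the star at x becomes {star s0},
   and the last fact of (1) rules out {star s0} at any other leaf. *)

text \<open>The last step of a shortest walk of length n+1 comes from a vertex at distance
  exactly n.  Needed to propagate orientations outward from the leaf.\<close>
lemma shortest_walk_predecessor:
  assumes walk: "(x, v) \<in> E ^^ Suc n" and shortest: "\<forall>m<Suc n. (x, v) \<notin> E ^^ m"
  obtains w where "(x, w) \<in> E ^^ n" "\<forall>m<n. (x, w) \<notin> E ^^ m" "(w, v) \<in> E"
proof -
  from walk obtain w where xw: "(x, w) \<in> E ^^ n" and wv: "(w, v) \<in> E"
    by (metis relpow_Suc_E)
  have "(x, w) \<notin> E ^^ m" if "m < n" for m
  proof
    assume "(x, w) \<in> E ^^ m"
    then have "(x, v) \<in> E ^^ Suc m" using wv by (rule relpow_Suc_I)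
    moreover have "Suc m < Suc n" using \<open>m < n\<close> by simp
    ultimately show False using shortest by blast
  qed
  then show thesis using that xw wv by blast
qed

section \<open>The shifting map\<close>

lemma universe_involution: "universe star \<Longrightarrow> star (star a) = a"
  unfolding universe_def by auto

lemma universe_star_swap: "universe star \<Longrightarrow> star a = b \<longleftrightarrow> a = star b"
  using universe_involution by metis

lemma shift_up: "r \<le> s \<Longrightarrow> s \<noteq> star r \<Longrightarrow> shift star r s0 s = sup s s0"
  unfolding shift_def by simp

lemma shift_down: "\<not> (r \<le> s \<and> s \<noteq> star r) \<Longrightarrow> shift star r s0 s = star (sup (star s) s0)"
  unfolding shift_def by (rule if_not_P)

context
  fixes star :: "'u::lattice \<Rightarrow> 'u" and S :: "'u set" and r s0 :: 'u
  assumes U: "universe star"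
    and S: "sep_system star S"
    and nontriv: "\<not> trivial_in star S r"
    and nondeg: "\<not> degenerate star r"
    and linked: "linked star S r s0"
begin

lemmas involution = universe_involution[OF U]
  and star_swap = universe_star_swap[OF U]

lemma s0_in_S: "s0 \<in> S" and r_le_s0: "r \<le> s0"
  using linked unfolding linked_def by auto

lemma nontrivial_below_both:
  assumes "s \<in> S" "r \<le> s" "r \<le> star s"
  shows "r = s \<or> r = star s"
  using nontriv assms unfolding trivial_in_def by (auto simp: less_le)

lemma shift_star_r: "shift star r s0 (star r) = star s0"
  using shift_down[of r "star r" star s0] r_le_s0 involution by (simp add: sup_absorb2)

text \<open>Linkedness makes the shifting map take values in S.\<close>
lemma shift_in_S:
  assumes s: "s \<in> S_ge star S r"
  shows "shift star r s0 s \<in> S"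
proof -
  have sS: "s \<in> S" and or: "r \<le> s \<or> r \<le> star s" using s unfolding S_ge_def by auto
  have sup_in_S: "\<And>t. t \<in> S \<Longrightarrow> r \<le> t \<Longrightarrow> t \<noteq> star r \<Longrightarrow> sup t s0 \<in> S"
    using linked unfolding linked_def by auto
  have star_in_S: "\<And>t. t \<in> S \<Longrightarrow> star t \<in> S" using S unfolding sep_system_def by auto
  consider "r \<le> s \<and> s \<noteq> star r" | "s = star r" | "\<not> r \<le> s" by auto
  then show ?thesis
  proof cases
    case 1
    then show ?thesis using sup_in_S sS shift_up[of r s star s0] by auto
  next
    case 2
    then show ?thesis using shift_star_r star_in_S s0_in_S by simp
  next
    case 3
    then have "r \<le> star s" "star s \<noteq> star r" using or by (auto simp: star_swap involution)
    then show ?thesis using shift_down[of r s star s0] 3 sup_in_S star_in_S sS by auto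
  qed
qed

text \<open>On S_{\<ge>r} the shifting map commutes with the involution; this uses that r is
  nontrivial (only one orientation of s lies above r) and nondegenerate.\<close>
lemma shift_star_commute:
  assumes s: "s \<in> S_ge star S r"
  shows "shift star r s0 (star s) = star (shift star r s0 s)"
proof -
  have sS: "s \<in> S" and or: "r \<le> s \<or> r \<le> star s" using s unfolding S_ge_def by auto
  have nd: "r \<noteq> star r" using nondeg unfolding degenerate_def by auto
  have "\<not> ((r \<le> s \<and> s \<noteq> star r) \<and> (r \<le> star s \<and> star s \<noteq> star r))"
    using nontrivial_below_both[OF sS] by (auto simp: star_swap involution)
  moreover have "(r \<le> s \<and> s \<noteq> star r) \<or> (r \<le> star s \<and> star s \<noteq> star r)"
    using or nd by (auto simp: star_swap involution)
  ultimately consider "r \<le> s \<and> s \<noteq> star r" "\<not> (r \<le> star s \<and> star s \<noteq> star r)"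
    | "r \<le> star s \<and> star s \<noteq> star r" "\<not> (r \<le> s \<and> s \<noteq> star r)" by blast
  then show ?thesis
    by cases (simp_all add: shift_up shift_down involution)
qed

text \<open>A separation s \<ge> r other than star r is never shifted to star s0: otherwise
  r \<le> s \<le> star s0 and r \<le> s0, so nontriviality forces r = s0 or r = star s0, and both
  contradict the hypotheses.\<close>
lemma shift_up_ne_star_s0:
  assumes rs: "r \<le> s" and s_ne: "s \<noteq> star r"
  shows "shift star r s0 s \<noteq> star s0"
proof
  assume "shift star r s0 s = star s0"
  then have eq: "sup s s0 = star s0" using shift_up[of r s star s0] rs s_ne by simp
  then have "s \<le> star s0" "s0 \<le> star s0" by (metis sup.cobounded1, metis sup.cobounded2)
  then have "r = s0 \<or> r = star s0"
    using nontrivial_below_both[OF s0_in_S r_le_s0] rs by auto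
  then show False
  proof
    assume "r = s0"
    then show False using eq s_ne rs by (simp add: sup_absorb1)
  next
    assume "r = star s0"
    then have "s0 = r" using \<open>s0 \<le> star s0\<close> r_le_s0 by auto
    then show False using \<open>r = star s0\<close> nondeg unfolding degenerate_def by simp
  qed
qed

end

section \<open>Irredundant S-trees over stars\<close>

lemma S_tree_comp:
  assumes T: "S_tree star S V E \<alpha>"
    and in_S: "\<forall>e\<in>E. g (\<alpha> e) \<in> S"
    and commute: "\<forall>e\<in>E. g (star (\<alpha> e)) = star (g (\<alpha> e))"
  shows "S_tree star S V E (g \<circ> \<alpha>)"
  using assms unfolding S_tree_def by auto

lemma leaf_neighbour_unique:
  assumes leaf: "is_leaf V E x" and "(y, x) \<in> E" "(z, x) \<in> E"
  shows "z = y"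
proof -
  obtain a where "neighbours E x = {a}"
    using leaf card_1_singletonE unfolding is_leaf_def by blast
  then show ?thesis using assms(2,3) unfolding neighbours_def
    by (metis mem_Collect_eq singletonD)
qed

context
  fixes star :: "'u::lattice \<Rightarrow> 'u" and S :: "'u set" and F :: "'u set set"
    and V :: "'v set" and E :: "('v \<times> 'v) set" and \<alpha> :: "'v \<times> 'v \<Rightarrow> 'u"
  assumes F: "\<forall>\<sigma>\<in>F. is_star star S \<sigma>"
    and T: "S_tree star S V E \<alpha>"
    and overF: "over V E \<alpha> F"
    and irr: "irredundant V E \<alpha>"
begin

lemma edge_sym: "(a, b) \<in> E \<Longrightarrow> (b, a) \<in> E"
  and edge_in_V: "(a, b) \<in> E \<Longrightarrow> a \<in> V \<and> b \<in> V"
  and label_star: "(a, b) \<in> E \<Longrightarrow> \<alpha> (b, a) = star (\<alpha> (a, b))"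
proof -
  have "finite_tree V E" and lab: "\<forall>a b. (a, b) \<in> E \<longrightarrow> \<alpha> (b, a) = star (\<alpha> (a, b))"
    using T unfolding S_tree_def by blast+
  then have "\<forall>a b. (a, b) \<in> E \<longrightarrow> (b, a) \<in> E" and "E \<subseteq> V \<times> V"
    unfolding finite_tree_def by blast+
  then show "(a, b) \<in> E \<Longrightarrow> (b, a) \<in> E" and "(a, b) \<in> E \<Longrightarrow> a \<in> V \<and> b \<in> V"
    and "(a, b) \<in> E \<Longrightarrow> \<alpha> (b, a) = star (\<alpha> (a, b))"
    using lab by blast+
qed

text \<open>Two distinct edges into a node w: the label of one lies below the inverse of the
  other, because the labels at w form a star without repetitions.\<close>
lemma star_step:
  assumes uw: "(u, w) \<in> E" and vw: "(v, w) \<in> E" and uv: "u \<noteq> v"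
  shows "\<alpha> (u, w) \<le> \<alpha> (w, v)"
proof -
  have wV: "w \<in> V" using edge_in_V uw by auto
  then have "is_star star S (\<alpha> ` F_at E w)"
    using overF F unfolding over_def by auto
  moreover have "\<alpha> (u, w) \<in> \<alpha> ` F_at E w" "\<alpha> (v, w) \<in> \<alpha> ` F_at E w"
    using uw vw unfolding F_at_def by auto
  moreover have "\<alpha> (u, w) \<noteq> \<alpha> (v, w)"
    using irr uw vw uv wV unfolding irredundant_def by blast
  ultimately show ?thesis using label_star[OF vw] unfolding is_star_def by auto
qed

context
  fixes x y :: 'v
  assumes leaf: "is_leaf V E x" and e: "(x, y) \<in> E"
begin

lemma leaf_incoming: "F_at E x = {(y, x)}"
  using leaf_neighbour_unique[OF leaf] edge_sym e unfolding F_at_def by blast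

text \<open>Induction along a shortest walk from the leaf: the last edge of the walk carries a
  label \<ge> \<alpha>(x,y), since consecutive distinct edges increase by star_step.\<close>
lemma shortest_walk_label:
  "(x, v) \<in> E ^^ Suc n \<Longrightarrow> \<forall>m<Suc n. (x, v) \<notin> E ^^ m \<Longrightarrow>
     \<exists>u. (u, v) \<in> E \<and> \<alpha> (x, y) \<le> \<alpha> (u, v) \<and> (x, u) \<in> E ^^ n"
proof (induction n arbitrary: v)
  case 0
  then have "(x, v) \<in> E" by auto
  then have "v = y" using leaf_neighbour_unique[OF leaf] edge_sym e by blast
  then show ?case using e by auto
next
  case (Suc n)
  obtain w where xw: "(x, w) \<in> E ^^ Suc n" and w_short: "\<forall>m<Suc n. (x, w) \<notin> E ^^ m"
    and wv: "(w, v) \<in> E"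
    using shortest_walk_predecessor[OF Suc.prems] .
  obtain u where uw: "(u, w) \<in> E" and ru: "\<alpha> (x, y) \<le> \<alpha> (u, w)" and xu: "(x, u) \<in> E ^^ n"
    using Suc.IH[OF xw w_short] by blast
  have "u \<noteq> v"
  proof
    assume "u = v"
    moreover have "n < Suc (Suc n)" by simp
    ultimately show False using xu Suc.prems(2) by blast
  qed
  then have "\<alpha> (u, w) \<le> \<alpha> (w, v)" using star_step[OF uw edge_sym[OF wv]] by simp
  then show ?case using ru xw wv by (meson order_trans)
qed

lemma incoming_label_above:
  assumes v: "v \<in> V" "v \<noteq> x"
  shows "\<exists>u. (u, v) \<in> E \<and> \<alpha> (x, y) \<le> \<alpha> (u, v)"
proof -
  have "x \<in> V" using leaf unfolding is_leaf_def by auto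
  then have "(x, v) \<in> E\<^sup>*" using T v unfolding S_tree_def finite_tree_def by auto
  then obtain n where "(x, v) \<in> E ^^ n" using rtrancl_power by blast
  define k where "k = (LEAST n. (x, v) \<in> E ^^ n)"
  have walk: "(x, v) \<in> E ^^ k" unfolding k_def by (rule LeastI) fact
  have shortest: "\<forall>m<k. (x, v) \<notin> E ^^ m" unfolding k_def using not_less_Least by blast
  have "k \<noteq> 0" using walk v by (cases k) auto
  then obtain j where "k = Suc j" using not0_implies_Suc by blast
  then show ?thesis using shortest_walk_label walk shortest by blast
qed

lemma label_in_S_ge:
  assumes ab: "(a, b) \<in> E"
  shows "\<alpha> (a, b) \<in> S_ge star S (\<alpha> (x, y))"
proof -
  have "\<alpha> (x, y) \<le> \<alpha> (a, b) \<or> \<alpha> (x, y) \<le> star (\<alpha> (a, b))"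
  proof (cases "a = x")
    case True
    then have "b = y" using leaf_neighbour_unique[OF leaf] edge_sym ab e by blast
    then show ?thesis using True by auto
  next
    case False
    obtain u where ua: "(u, a) \<in> E" and ru: "\<alpha> (x, y) \<le> \<alpha> (u, a)"
      using incoming_label_above edge_in_V[OF ab] False by blast
    show ?thesis
    proof (cases "u = b")
      case True
      then show ?thesis using ru label_star[OF ab] by auto
    next
      case False
      then show ?thesis using star_step[OF ua edge_sym[OF ab]] ru by auto
    qed
  qed
  then show ?thesis using T ab unfolding S_tree_def S_ge_def by auto
qed

text \<open>If \<alpha>(x,y) labels no other edge, the star at a node t \<noteq> x is a star of
  S_{\<ge>\<alpha>(x,y)} - {star \<alpha>(x,y)} with an element \<ge> \<alpha>(x,y): exactly the stars to
  which F-linkedness applies.\<close>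
lemma node_star_shiftable:
  assumes uniq: "\<forall>e'\<in>E. e' \<noteq> (x, y) \<longrightarrow> \<alpha> e' \<noteq> \<alpha> (x, y)"
    and involution: "\<And>a. star (star a) = a"
    and t: "t \<in> V" "t \<noteq> x"
  shows "\<alpha> ` F_at E t \<subseteq> S_ge star S (\<alpha> (x, y)) - {star (\<alpha> (x, y))}"
    and "\<exists>s\<in>\<alpha> ` F_at E t. \<alpha> (x, y) \<le> s"
proof -
  have "star (\<alpha> (x, y)) \<notin> \<alpha> ` F_at E t"
  proof
    assume "star (\<alpha> (x, y)) \<in> \<alpha> ` F_at E t"
    then obtain u where ut: "(u, t) \<in> E" and "\<alpha> (u, t) = star (\<alpha> (x, y))"
      unfolding F_at_def by auto
    then have "\<alpha> (t, u) = \<alpha> (x, y)" using label_star[OF ut] involution by metis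
    then show False using uniq edge_sym[OF ut] t by blast
  qed
  then show "\<alpha> ` F_at E t \<subseteq> S_ge star S (\<alpha> (x, y)) - {star (\<alpha> (x, y))}"
    using label_in_S_ge unfolding F_at_def by blast
  show "\<exists>s\<in>\<alpha> ` F_at E t. \<alpha> (x, y) \<le> s"
    using incoming_label_above[OF t] unfolding F_at_def by blast
qed

end

end

theorem lemma4p3:
  fixes star :: "'u::lattice \<Rightarrow> 'u"
    and S :: "'u set" and F :: "'u set set"
    and V :: "'v set" and E :: "('v \<times> 'v) set" and \<alpha> :: "'v \<times> 'v \<Rightarrow> 'u"
    and x y :: 'v and s0 :: 'u
  assumes U: "universe star"
    and S: "sep_system star S"
    and F: "\<forall>\<sigma>\<in>F. is_star star S \<sigma>"
    and T: "S_tree star S V E \<alpha>"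
    and overF: "over V E \<alpha> F"
    and irr: "irredundant V E \<alpha>"
    and leaf: "is_leaf V E x"
    and e: "(x, y) \<in> E"
    and nontriv: "\<not> trivial_in star S (\<alpha> (x, y))"
    and nondeg: "\<not> degenerate star (\<alpha> (x, y))"
    and uniq: "\<forall>e'\<in>E. e' \<noteq> (x, y) \<longrightarrow> \<alpha> e' \<noteq> \<alpha> (x, y)"
    and s0: "s0 \<in> S"
    and Flinked: "F_linked star S F (\<alpha> (x, y)) s0"
  shows "(\<forall>e'\<in>E. \<alpha> e' \<in> S_ge star S (\<alpha> (x, y)))
     \<and> (\<forall>e'\<in>E. shift star (\<alpha> (x, y)) s0 (\<alpha> e') \<in> S)
     \<and> S_tree star S V E (shift star (\<alpha> (x, y)) s0 \<circ> \<alpha>)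
     \<and> over V E (shift star (\<alpha> (x, y)) s0 \<circ> \<alpha>) (F \<union> {{star s0}})
     \<and> (shift star (\<alpha> (x, y)) s0 \<circ> \<alpha>) ` F_at E x = {star s0}
     \<and> (\<forall>z. is_leaf V E z \<and> z \<noteq> x \<longrightarrow> (shift star (\<alpha> (x, y)) s0 \<circ> \<alpha>) ` F_at E z \<noteq> {star s0})"
proof -
  define r where "r = \<alpha> (x, y)"
  define f where "f = shift star r s0"
  have linked: "linked star S r s0" using Flinked unfolding F_linked_def r_def by auto
  note shift_facts = shift_in_S shift_star_commute shift_star_r shift_up_ne_star_s0
  note shift = shift_facts[OF U S nontriv[folded r_def] nondeg[folded r_def] linked, folded f_def]
  have labels_ge: "\<forall>e'\<in>E. \<alpha> e' \<in> S_ge star S r"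
    using label_in_S_ge[OF F T overF irr leaf e] r_def by auto
  have shifted_tree: "S_tree star S V E (f \<circ> \<alpha>)"
    using S_tree_comp[OF T] labels_ge shift(1,2) by auto
  have at_leaf: "(f \<circ> \<alpha>) ` F_at E x = {star s0}"
    using leaf_incoming[OF F T overF irr leaf e] label_star[OF F T overF irr e] shift(3) r_def
    by auto
  note node_star = node_star_shiftable[OF F T overF irr leaf e uniq universe_involution[OF U], folded r_def]
  have at_other_nodes: "(f \<circ> \<alpha>) ` F_at E t \<in> F" if "t \<in> V" "t \<noteq> x" for t
  proof -
    have "\<alpha> ` F_at E t \<in> F" using overF that unfolding over_def by auto
    then have "f ` (\<alpha> ` F_at E t) \<in> F"
      using Flinked F node_star[OF that] unfolding F_linked_def r_def f_def by blast
    then show ?thesis by (simp add: image_comp)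
  qed
  have shifted_over: "over V E (f \<circ> \<alpha>) (F \<union> {{star s0}})"
    using at_other_nodes at_leaf unfolding over_def by auto
  have other_leaves: "(f \<circ> \<alpha>) ` F_at E z \<noteq> {star s0}" if z: "is_leaf V E z" "z \<noteq> x" for z
  proof -
    obtain s where "s \<in> \<alpha> ` F_at E z" "r \<le> s" "s \<noteq> star r"
      using node_star[of z] z unfolding is_leaf_def by blast
    then show ?thesis using shift(4) by (auto simp: image_comp)
  qed
  show ?thesis
    using labels_ge shifted_tree shifted_over at_leaf other_leaves shift(1)
    unfolding f_def r_def by auto
qed

end
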